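(* For $n\ge 1$, the number of shallow $132$-avoiding involutions in $S_n$ (permutations with $\pi=\pi^{-1}$) equals $F_{n+1}$.
   Context: For $\pi\in S_n$: $D(\pi)=\sum_{i}|\pi_i-i|$, $I(\pi)$ is the number of inversions, $T(\pi)=n-\mathrm{cyc}(\pi)$ with $\mathrm{cyc}$ the number of cycles in the disjoint cycle decomposition; $\pi$ is shallow if $I(\pi)+T(\pi)=D(\pi)$. A permutation avoids a pattern $\sigma$ if it has no subsequence order-isomorphic to $\sigma$. $F_m$ are the Fibonacci numbers with $F_1=F_2=1$. *)

theory Defs
  imports "HOL-Combinatorics.Permutations" "HOL-Number_Theory.Fib"
begin

text \<open>Permutations of S_n are functions p with p permutes {1..n}.\<close>

definition total_disp :: "nat \<Rightarrow> (nat \<Rightarrow> nat) \<Rightarrow> int" where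
  "total_disp n p = (\<Sum>i\<in>{1..n}. \<bar>int (p i) - int i\<bar>)"

definition inversions :: "nat \<Rightarrow> (nat \<Rightarrow> nat) \<Rightarrow> nat" where
  "inversions n p = card {(i, j). i \<in> {1..n} \<and> j \<in> {1..n} \<and> i < j \<and> p i > p j}"

definition cyc_of :: "(nat \<Rightarrow> nat) \<Rightarrow> nat \<Rightarrow> nat set" where
  "cyc_of p i = {j. \<exists>k. (p ^^ k) i = j}"

definition num_cycles :: "nat \<Rightarrow> (nat \<Rightarrow> nat) \<Rightarrow> nat" where
  "num_cycles n p = card (cyc_of p ` {1..n})"

definition reflength :: "nat \<Rightarrow> (nat \<Rightarrow> nat) \<Rightarrow> int" where
  "reflength n p = int n - int (num_cycles n p)"

definition shallow :: "nat \<Rightarrow> (nat \<Rightarrow> nat) \<Rightarrow> bool" where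
  "shallow n p \<longleftrightarrow> int (inversions n p) + reflength n p = total_disp n p"

definition avoids_132 :: "nat \<Rightarrow> (nat \<Rightarrow> nat) \<Rightarrow> bool" where
  "avoids_132 n p \<longleftrightarrow> \<not> (\<exists>i j k. 1 \<le> i \<and> i < j \<and> j < k \<and> k \<le> n \<and> p i < p k \<and> p k < p j)"

definition involution :: "(nat \<Rightarrow> nat) \<Rightarrow> bool" where
  "involution p \<longleftrightarrow> p \<circ> p = id"

end

theory Submission
  imports Defs
begin

(*
  For an involution p of a finite set S of naturals, the points i with p i < i are the larger ends
  of its 2-cycles, so they count the reflection length T, and the defect D - I - T is nonnegative:
  removing the 2-cycle (k t) through t = Max S lowers D by 2 (t - k), T by 1, and I by at most
  2 (t - k) - 1 - c, where c counts the points i < k with p i > k. If p avoids 132 and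
  Min S < k < t, then Min S is such a point; hence a shallow 132-avoiding involution maps Max S to
  itself or to Min S. On an interval, a fixed maximum or an outer 2-cycle (a t) can be added or
  removed without leaving the class, which gives the Fibonacci recurrence.
*)

definition displacement_on :: "nat set \<Rightarrow> (nat \<Rightarrow> nat) \<Rightarrow> int" where
  "displacement_on S p = (\<Sum>i\<in>S. \<bar>int (p i) - int i\<bar>)"

definition inversions_on :: "nat set \<Rightarrow> (nat \<Rightarrow> nat) \<Rightarrow> nat" where
  "inversions_on S p = card {(i, j). i \<in> S \<and> j \<in> S \<and> i < j \<and> p i > p j}"

definition deficiencies_on :: "nat set \<Rightarrow> (nat \<Rightarrow> nat) \<Rightarrow> nat" where
  "deficiencies_on S p = card {i \<in> S. p i < i}"

definition shallow_defect :: "nat set \<Rightarrow> (nat \<Rightarrow> nat) \<Rightarrow> int" where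
  "shallow_defect S p = displacement_on S p - int (inversions_on S p) - int (deficiencies_on S p)"

definition avoids_132_on :: "nat set \<Rightarrow> (nat \<Rightarrow> nat) \<Rightarrow> bool" where
  "avoids_132_on S p \<longleftrightarrow> \<not> (\<exists>i\<in>S. \<exists>j\<in>S. \<exists>k\<in>S. i < j \<and> j < k \<and> p i < p k \<and> p k < p j)"

definition shallow_132_involution :: "nat set \<Rightarrow> (nat \<Rightarrow> nat) \<Rightarrow> bool" where
  "shallow_132_involution S p \<longleftrightarrow>
     involution p \<and> p permutes S \<and> avoids_132_on S p \<and> shallow_defect S p = 0"

lemma involutionD: "involution p \<Longrightarrow> p (p x) = x"
  by (metis comp_apply id_apply involution_def)

lemma involutionI: "(\<And>x. p (p x) = x) \<Longrightarrow> involution p"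
  by (auto simp: involution_def)

lemma involution_inj: "involution p \<Longrightarrow> inj p"
  by (metis injI involutionD)

lemma involution_permutesI:
  assumes "involution p" and "\<And>x. x \<notin> S \<Longrightarrow> p x = x"
  shows "p permutes S"
  using assms unfolding permutes_def by (metis involutionD)

lemma involution_notin_pair:
  assumes "involution p" and "p ` {a, t} = {a, t}" and "x \<notin> {a, t}"
  shows "p x \<notin> {a, t}"
proof
  assume "p x \<in> {a, t}"
  then have "p x \<in> p ` {a, t}"
    using assms(2) by simp
  then have "x \<in> {a, t}"
    by (rule iffD1[OF inj_image_mem_iff[OF involution_inj[OF assms(1)]]])
  then show False
    using assms(3) by contradiction
qed

lemma involution_remove_two_cycle:
  assumes "involution p" and "p a = t"
  shows "involution (p(a := a, t := t))"
proof (rule involutionI)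
  fix x
  have "p ` {a, t} = {a, t}"
    using involutionD[OF assms(1), of a] assms(2) by auto
  then show "(p(a := a, t := t)) ((p(a := a, t := t)) x) = x"
    using involution_notin_pair[OF assms(1), of a t x] involutionD[OF assms(1), of x]
    by (cases "x \<in> {a, t}") auto
qed

lemma involution_add_two_cycle:
  assumes "involution q" and "q a = a" and "q t = t"
  shows "involution (q(a := t, t := a))"
proof (rule involutionI)
  fix x
  have "q ` {a, t} = {a, t}"
    using assms(2,3) by auto
  then show "(q(a := t, t := a)) ((q(a := t, t := a)) x) = x"
    using involution_notin_pair[OF assms(1), of a t x] involutionD[OF assms(1), of x] assms(2,3)
    by (cases "x \<in> {a, t}") auto
qed

lemma permutes_upper_bound:
  fixes t :: "'a :: order"
  assumes "p permutes S" and "\<And>j. j \<in> S \<Longrightarrow> j < t"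
  shows "p t = t" and "i \<in> S \<Longrightarrow> p i < t"
proof -
  have "t \<notin> S"
    using assms(2)[of t] by auto
  then show "p t = t"
    by (rule permutes_not_in[OF assms(1)])
  show "i \<in> S \<Longrightarrow> p i < t"
    by (simp add: assms permutes_in_image)
qed

lemma shallow_132_involution_id: "shallow_132_involution S id"
proof -
  have "inversions_on S id = 0"
    by (auto simp: inversions_on_def card_eq_0_iff)
  then show ?thesis
    by (simp add: shallow_132_involution_def involution_def avoids_132_on_def shallow_defect_def
        displacement_on_def deficiencies_on_def)
qed

lemma displacement_on_insert_fixed:
  assumes "finite S" and "t \<notin> S" and "p t = t"
  shows "displacement_on (insert t S) p = displacement_on S p"
  using assms by (simp add: displacement_on_def)

lemma deficiencies_on_insert_fixed:
  assumes "p t = t"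
  shows "deficiencies_on (insert t S) p = deficiencies_on S p"
  unfolding deficiencies_on_def using assms by (metis insert_iff less_irrefl)

lemma inversions_on_insert_max:
  assumes "p permutes S" and "\<And>j. j \<in> S \<Longrightarrow> j < t"
  shows "inversions_on (insert t S) p = inversions_on S p"
proof -
  note pt = permutes_upper_bound(1)[OF assms] and below = permutes_upper_bound(2)[OF assms]
  have "i \<in> S \<and> j \<in> S"
    if ij: "i \<in> insert t S" "j \<in> insert t S" "i < j" "p i > p j" for i j
  proof -
    have "j \<noteq> t"
    proof
      assume "j = t"
      then have "i \<in> S"
        using ij by auto
      then show False
        using below ij(4) pt \<open>j = t\<close> by fastforce
    qed
    then show ?thesis
      using ij assms(2) by fastforce
  qed
  then have "{(i, j). i \<in> insert t S \<and> j \<in> insert t S \<and> i < j \<and> p i > p j}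
      = {(i, j). i \<in> S \<and> j \<in> S \<and> i < j \<and> p i > p j}"
    by blast
  then show ?thesis
    by (simp add: inversions_on_def)
qed

lemma avoids_132_on_insert_max:
  assumes "p permutes S" and "\<And>j. j \<in> S \<Longrightarrow> j < t"
  shows "avoids_132_on (insert t S) p \<longleftrightarrow> avoids_132_on S p"
proof -
  note pt = permutes_upper_bound(1)[OF assms] and below = permutes_upper_bound(2)[OF assms]
  have "i \<in> S \<and> j \<in> S \<and> k \<in> S"
    if ijk: "i \<in> insert t S" "j \<in> insert t S" "k \<in> insert t S" "i < j" "j < k" "p k < p j"
    for i j k
  proof -
    have "k \<noteq> t"
    proof
      assume "k = t"
      then have "j \<in> S"
        using ijk by auto
      then show False
        using below ijk(6) pt \<open>k = t\<close> by fastforce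
    qed
    then show ?thesis
      using ijk assms(2) by fastforce
  qed
  then show ?thesis
    unfolding avoids_132_on_def by (meson insertCI)
qed

lemma shallow_defect_insert_max:
  assumes "finite S" and "p permutes S" and "\<And>j. j \<in> S \<Longrightarrow> j < t"
  shows "shallow_defect (insert t S) p = shallow_defect S p"
proof -
  have "t \<notin> S"
    using assms(3) by blast
  then show ?thesis
    using assms permutes_upper_bound(1)[OF assms(2,3)]
    by (simp add: shallow_defect_def displacement_on_insert_fixed
        deficiencies_on_insert_fixed inversions_on_insert_max)
qed

lemma shallow_132_involution_insert_max:
  assumes "finite S" and "\<And>j. j \<in> S \<Longrightarrow> j < t" and "p t = t"
  shows "shallow_132_involution (insert t S) p \<longleftrightarrow> shallow_132_involution S p"
proof -
  have "p permutes insert t S \<longleftrightarrow> p permutes S"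
  proof
    assume "p permutes insert t S"
    then show "p permutes S"
      by (rule permutes_superset) (use assms(3) in auto)
  qed (auto intro: permutes_subset)
  then show ?thesis
    unfolding shallow_132_involution_def
    using assms avoids_132_on_insert_max shallow_defect_insert_max by auto
qed

locale max_two_cycle =
  fixes S :: "nat set" and p :: "nat \<Rightarrow> nat" and t k :: nat
  assumes finite_S: "finite S" and involution: "involution p" and permutes: "p permutes S"
    and t_in: "t \<in> S" and t_max: "\<And>j. j \<in> S \<Longrightarrow> j \<le> t"
    and p_t: "p t = k" and k_neq_t: "k \<noteq> t"
begin

lemma p_k: "p k = t"
  using involutionD[OF involution, of t] p_t by simp

lemma k_in: "k \<in> S"
  using permutes_in_image[OF permutes, of t] t_in p_t by simp

lemma k_less: "k < t"
  using t_max[OF k_in] k_neq_t by simp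

lemma p_eq_t_iff: "p i = t \<longleftrightarrow> i = k"
  using involutionD[OF involution] p_k p_t by metis

lemma p_eq_k_iff: "p i = k \<longleftrightarrow> i = t"
  using involutionD[OF involution] p_k p_t by metis

lemma involution_remove: "involution (p(k := k, t := t))"
  using involution p_k by (rule involution_remove_two_cycle)

lemma permutes_remove: "p(k := k, t := t) permutes S - {t}"
proof (rule involution_permutesI[OF involution_remove])
  fix x
  assume "x \<notin> S - {t}"
  then show "(p(k := k, t := t)) x = x"
    using k_in permutes_not_in[OF permutes, of x] by auto
qed

lemma displacement_on_remove:
  "displacement_on S p = displacement_on (S - {t}) (p(k := k, t := t)) + 2 * (int t - int k)"
proof -
  let ?d = "\<lambda>f i. \<bar>int (f i) - int i\<bar>"
  let ?R = "S - {t} - {k}"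
  have k_in': "k \<in> S - {t}"
    using k_in k_neq_t by simp
  have "displacement_on S p = ?d p t + (?d p k + sum (?d p) ?R)"
    unfolding displacement_on_def
    using finite_S t_in k_in' by (simp add: sum.remove)
  moreover have "displacement_on (S - {t}) (p(k := k, t := t)) = sum (?d p) ?R"
    unfolding displacement_on_def using finite_S k_in' by (simp add: sum.remove)
  ultimately show ?thesis
    using p_t p_k k_less by simp
qed

lemma deficiencies_on_remove:
  "deficiencies_on S p = deficiencies_on (S - {t}) (p(k := k, t := t)) + 1"
proof -
  have "{i \<in> S. p i < i} = insert t {i \<in> S - {t}. (p(k := k, t := t)) i < i}"
    using t_in p_t p_k k_less by auto
  then show ?thesis
    unfolding deficiencies_on_def using finite_S by simp
qed

lemma inversion_pairs_remove_subset:
  "{(i, j). i \<in> S \<and> j \<in> S \<and> i < j \<and> p i > p j}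
     \<subseteq> {(i, j). i \<in> S - {k, t} \<and> j \<in> S - {k, t} \<and> i < j \<and> p i > p j}
       \<union> Pair k ` {j \<in> S. k < j} \<union> (\<lambda>i. (i, t)) ` {i \<in> S - {k, t}. k < p i}"
proof -
  define X where "X = {(i, j). i \<in> S - {k, t} \<and> j \<in> S - {k, t} \<and> i < j \<and> p i > p j}"
  define M where "M = {j \<in> S. k < j}"
  define B where "B = {i \<in> S - {k, t}. k < p i}"
  have "x \<in> X \<union> Pair k ` M \<union> (\<lambda>i. (i, t)) ` B"
    if inversion: "x \<in> {(i, j). i \<in> S \<and> j \<in> S \<and> i < j \<and> p i > p j}" for x
  proof -
    obtain i j where x: "x = (i, j)" and ij: "i \<in> S" "j \<in> S" "i < j" "p j < p i"
      using inversion by blast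
    show ?thesis
    proof (cases "i = k")
      case True
      then show ?thesis
        using ij unfolding x M_def by auto
    next
      case False
      have "i \<noteq> t"
        using t_max[of j] ij by auto
      moreover have "j \<noteq> k"
        using t_max[of "p i"] permutes_in_image[OF permutes, of i] ij p_k by auto
      ultimately show ?thesis
        using False ij p_t unfolding x X_def B_def by (cases "j = t") auto
    qed
  qed
  then show ?thesis
    unfolding X_def M_def B_def by blast
qed

lemma card_moved_above_k_less:
  "card {i \<in> S - {k, t}. k < p i} < card {j \<in> S. k < j}"
proof -
  let ?M = "{j \<in> S. k < j}" and ?B = "{i \<in> S - {k, t}. k < p i}"
  have "p ` ?B \<subseteq> ?M - {t}"
  proof
    fix y
    assume "y \<in> p ` ?B"
    then obtain i where "i \<in> S" "i \<noteq> k" "k < p i" "y = p i"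
      by blast
    then show "y \<in> ?M - {t}"
      using p_eq_t_iff[of i] permutes_in_image[OF permutes, of i] by simp
  qed
  have "card ?B = card (p ` ?B)"
    by (rule card_image[symmetric]) (rule inj_on_subset[OF involution_inj[OF involution] subset_UNIV])
  also have "\<dots> \<le> card (?M - {t})"
    by (rule card_mono) (use finite_S \<open>p ` ?B \<subseteq> ?M - {t}\<close> in auto)
  also have "\<dots> < card ?M"
    by (rule card_Diff1_less) (use finite_S t_in k_less in auto)
  finally show ?thesis .
qed

lemma inversions_on_remove_upper:
  "inversions_on S p + 1 \<le> inversions_on (S - {k, t}) p + 2 * card {j \<in> S. k < j}"
proof -
  let ?X = "{(i, j). i \<in> S - {k, t} \<and> j \<in> S - {k, t} \<and> i < j \<and> p i > p j}"
  let ?M = "{j \<in> S. k < j}" and ?B = "{i \<in> S - {k, t}. k < p i}"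
  have fin: "finite ?M" "finite ?B" "finite ?X"
    using finite_S by (auto intro: finite_subset[of _ "S \<times> S"])
  have "inversions_on S p \<le> card (?X \<union> Pair k ` ?M \<union> (\<lambda>i. (i, t)) ` ?B)"
    unfolding inversions_on_def by (rule card_mono[OF _ inversion_pairs_remove_subset]) (use fin in simp)
  also have "\<dots> \<le> card ?X + card ?M + card ?B"
    using card_Un_le[of "?X \<union> Pair k ` ?M" "(\<lambda>i. (i, t)) ` ?B"] card_Un_le[of ?X "Pair k ` ?M"]
      card_image_le[OF fin(1), of "Pair k"] card_image_le[OF fin(2), of "\<lambda>i. (i, t)"]
    by linarith
  finally show ?thesis
    using card_moved_above_k_less unfolding inversions_on_def by linarith
qed

lemma inversions_on_remove_lower:
  "inversions_on (S - {k, t}) p + card {i \<in> S. i < k \<and> k < p i}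
     \<le> inversions_on (S - {t}) (p(k := k, t := t))"
proof -
  define B where "B = {i \<in> S. i < k \<and> k < p i}"
  define X where "X = {(i, j). i \<in> S - {k, t} \<and> j \<in> S - {k, t} \<and> i < j \<and> p i > p j}"
  let ?q = "p(k := k, t := t)"
  have fin: "finite B" "finite X" "finite {(i, j). i \<in> S - {t} \<and> j \<in> S - {t} \<and> i < j \<and> ?q i > ?q j}"
    using finite_S unfolding B_def X_def by (auto intro: finite_subset[of _ "S \<times> S"])
  have "X \<union> (\<lambda>i. (i, k)) ` B \<subseteq> {(i, j). i \<in> S - {t} \<and> j \<in> S - {t} \<and> i < j \<and> ?q i > ?q j}"
    using k_in k_less unfolding X_def B_def by auto
  then have "card (X \<union> (\<lambda>i. (i, k)) ` B) \<le> inversions_on (S - {t}) ?q"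
    unfolding inversions_on_def using fin(3) by (rule card_mono[rotated])
  moreover have "card (X \<union> (\<lambda>i. (i, k)) ` B) = card X + card B"
  proof -
    have "X \<inter> (\<lambda>i. (i, k)) ` B = {}"
      unfolding X_def by auto
    then show ?thesis
      using fin by (simp add: card_Un_disjoint card_image inj_on_def)
  qed
  ultimately show ?thesis
    unfolding X_def B_def inversions_on_def by simp
qed

lemma card_above_k_le: "card {j \<in> S. k < j} \<le> t - k"
proof -
  have "{j \<in> S. k < j} \<subseteq> {k<..t}"
    using t_max by auto
  then show ?thesis
    using card_mono[OF finite_greaterThanAtMost] by fastforce
qed

lemma shallow_defect_remove:
  "shallow_defect (S - {t}) (p(k := k, t := t)) + int (card {i \<in> S. i < k \<and> k < p i})
     \<le> shallow_defect S p"
proof -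
  have "inversions_on S p + 1 + card {i \<in> S. i < k \<and> k < p i}
      \<le> inversions_on (S - {t}) (p(k := k, t := t)) + 2 * card {j \<in> S. k < j}"
    using inversions_on_remove_upper inversions_on_remove_lower by linarith
  then have "int (inversions_on S p) + 1 + int (card {i \<in> S. i < k \<and> k < p i})
      \<le> int (inversions_on (S - {t}) (p(k := k, t := t))) + 2 * int (card {j \<in> S. k < j})"
    by (metis (mono_tags) of_nat_add of_nat_le_iff of_nat_mult of_nat_numeral of_nat_1)
  moreover have "int (card {j \<in> S. k < j}) \<le> int t - int k"
    using card_above_k_le k_less by linarith
  moreover have "int (deficiencies_on S p) = int (deficiencies_on (S - {t}) (p(k := k, t := t))) + 1"
    using deficiencies_on_remove by simp
  ultimately show ?thesis
    unfolding shallow_defect_def using displacement_on_remove by (smt (verit))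
qed

end

theorem shallow_defect_nonneg:
  assumes "finite S" and "involution p" and "p permutes S"
  shows "0 \<le> shallow_defect S p"
  using assms
proof (induction S arbitrary: p rule: finite_remove_induct)
  case empty
  then have "p = id"
    by simp
  then show ?case
    using shallow_132_involution_id[of "{}"] unfolding shallow_132_involution_def
    by (metis order_refl)
next
  case (remove S)
  define t where "t = Max S"
  have t: "t \<in> S" "\<And>j. j \<in> S \<Longrightarrow> j \<le> t"
    using remove.hyps(1,2) by (simp_all add: t_def)
  show ?case
  proof (cases "p t = t")
    case True
    have "p permutes S - {t}"
      using remove.prems(2) by (rule permutes_superset) (use True in auto)
    moreover have "\<And>j. j \<in> S - {t} \<Longrightarrow> j < t"
      using t(2) by force
    ultimately have "shallow_defect S p = shallow_defect (S - {t}) p"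
      using shallow_defect_insert_max[of "S - {t}" p t] remove.hyps(1) t(1) by (simp add: insert_absorb)
    then show ?thesis
      using remove.IH[OF t(1) remove.prems(1) \<open>p permutes S - {t}\<close>] by simp
  next
    case False
    interpret max_two_cycle S p t "p t"
      using remove t False by unfold_locales auto
    show ?thesis
      using remove.IH[OF t(1) involution_remove permutes_remove] shallow_defect_remove by linarith
  qed
qed

theorem shallow_132_involution_max:
  assumes "finite S" and "shallow_132_involution S p" and "t \<in> S" and "\<And>j. j \<in> S \<Longrightarrow> j \<le> t"
  shows "p t = t \<or> p t = Min S"
proof (rule ccontr)
  assume moved: "\<not> (p t = t \<or> p t = Min S)"
  have avoids: "avoids_132_on S p" and shallow: "shallow_defect S p = 0"
    using assms(2) unfolding shallow_132_involution_def by auto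
  interpret max_two_cycle S p t "p t"
    using assms moved unfolding shallow_132_involution_def by unfold_locales auto
  define a where "a = Min S"
  have a_in: "a \<in> S"
    unfolding a_def using assms(1) t_in by (auto intro: Min_in)
  have a_less: "a < p t"
    unfolding a_def using Min_le[OF assms(1) k_in] moved by simp
  \<comment> \<open>otherwise a, p t, t would be an occurrence of 132\<close>
  have "p t < p a"
  proof -
    have "p a \<noteq> p t"
      using p_eq_k_iff[of a] a_less k_less by simp
    moreover have "\<not> p a < p t"
    proof
      assume "p a < p t"
      then have "a < p t \<and> p t < t \<and> p a < p t \<and> p t < p (p t)"
        using a_less k_less p_k by simp
      then show False
        using avoids a_in k_in t_in unfolding avoids_132_on_def by blast
    qed
    ultimately show ?thesis
      by simp
  qed
  then have "a \<in> {i \<in> S. i < p t \<and> p t < p i}"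
    using a_in a_less by simp
  then have "1 \<le> card {i \<in> S. i < p t \<and> p t < p i}"
    using finite_S by (auto simp: Suc_le_eq card_gt_0_iff)
  moreover have "0 \<le> shallow_defect (S - {t}) (p(p t := p t, t := t))"
    using finite_S involution_remove permutes_remove by (simp add: shallow_defect_nonneg)
  ultimately show False
    using shallow_defect_remove shallow by linarith
qed

locale outer_two_cycle =
  fixes S :: "nat set" and q :: "nat \<Rightarrow> nat" and a t :: nat
  assumes involution: "involution q" and permutes: "q permutes S"
    and a_less_t: "a < t" and inside: "S \<subseteq> {a<..<t}"
begin

lemma finite_S: "finite S"
  using inside by (rule finite_subset) simp

lemma q_a: "q a = a" and q_t: "q t = t"
  using inside by (auto intro!: permutes_not_in[OF permutes])

lemma S_bounds: "i \<in> S \<Longrightarrow> a < i \<and> i < t"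
  using inside by auto

lemma update_on_S: "i \<in> S \<Longrightarrow> (q(a := t, t := a)) i = q i"
  using S_bounds by fastforce

lemma q_inside: "i \<in> S \<Longrightarrow> a < q i \<and> q i < t"
proof -
  assume "i \<in> S"
  then have "q i \<in> S"
    by (simp add: permutes_in_image[OF permutes])
  then show ?thesis
    using inside by auto
qed

lemma involution_add: "involution (q(a := t, t := a))"
  using involution q_a q_t by (rule involution_add_two_cycle)

lemma permutes_add: "q(a := t, t := a) permutes insert a (insert t S)"
proof (rule involution_permutesI[OF involution_add])
  fix x
  assume "x \<notin> insert a (insert t S)"
  then show "(q(a := t, t := a)) x = x"
    using permutes_not_in[OF permutes, of x] by simp
qed

lemma displacement_on_add:
  "displacement_on (insert a (insert t S)) (q(a := t, t := a)) = displacement_on S q + 2 * (int t - int a)"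
proof -
  have "a \<notin> insert t S" and "t \<notin> S"
    using inside a_less_t by auto
  moreover have "(\<Sum>i\<in>S. \<bar>int ((q(a := t, t := a)) i) - int i\<bar>) = (\<Sum>i\<in>S. \<bar>int (q i) - int i\<bar>)"
    using \<open>a \<notin> insert t S\<close> \<open>t \<notin> S\<close> by (intro sum.cong) auto
  ultimately show ?thesis
    unfolding displacement_on_def using finite_S a_less_t by simp
qed

lemma deficiencies_on_add:
  "deficiencies_on (insert a (insert t S)) (q(a := t, t := a)) = deficiencies_on S q + 1"
proof -
  have "{i \<in> insert a (insert t S). (q(a := t, t := a)) i < i} = insert t {i \<in> S. q i < i}"
    using inside a_less_t by auto
  moreover have "t \<notin> S"
    using inside by auto
  ultimately show ?thesis
    unfolding deficiencies_on_def using finite_S by simp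
qed

lemma inversion_pairs_add:
  "{(i, j). i \<in> insert a (insert t S) \<and> j \<in> insert a (insert t S) \<and> i < j
       \<and> (q(a := t, t := a)) i > (q(a := t, t := a)) j}
     = {(i, j). i \<in> S \<and> j \<in> S \<and> i < j \<and> q i > q j} \<union> (Pair a ` insert t S \<union> (\<lambda>i. (i, t)) ` S)"
  (is "?L = ?X \<union> ?R")
proof (intro set_eqI iffI)
  let ?p = "q(a := t, t := a)" and ?T = "insert a (insert t S)"
  fix x
  assume "x \<in> ?L"
  then obtain i j where x: "x = (i, j)" and ij: "i \<in> ?T" "j \<in> ?T" "i < j" "?p j < ?p i"
    by blast
  show "x \<in> ?X \<union> ?R"
  proof (cases "i = a")
    case True
    then show ?thesis
      using ij(2,3) unfolding x by auto
  next
    case False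
    then have "i \<in> S"
      using ij(1-3) S_bounds[of j] a_less_t by auto
    moreover have "j \<noteq> a"
      using S_bounds[of i] \<open>i \<in> S\<close> ij(3) by auto
    ultimately show ?thesis
      using ij update_on_S[of i] update_on_S[of j] unfolding x by (cases "j = t") auto
  qed
next
  fix x
  assume "x \<in> ?X \<union> ?R"
  then show "x \<in> ?L"
    using update_on_S S_bounds q_inside a_less_t by auto
qed

lemma inversions_on_add:
  "inversions_on (insert a (insert t S)) (q(a := t, t := a)) = inversions_on S q + 2 * card S + 1"
proof -
  define X where "X = {(i, j). i \<in> S \<and> j \<in> S \<and> i < j \<and> q i > q j}"
  define P where "P = Pair a ` insert t S"
  define Q where "Q = (\<lambda>i. (i, t)) ` S"
  have "t \<notin> S"
    using S_bounds by blast
  have fin: "finite X" "finite P" "finite Q"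
    unfolding X_def P_def Q_def using finite_S by (auto intro: finite_subset[of _ "S \<times> S"])
  have "X \<inter> (P \<union> Q) = {}" and "P \<inter> Q = {}"
    unfolding X_def P_def Q_def using S_bounds by auto
  then have "card (X \<union> (P \<union> Q)) = card X + (card P + card Q)"
    using fin by (simp add: card_Un_disjoint)
  moreover have "card P = card S + 1"
    unfolding P_def using finite_S \<open>t \<notin> S\<close> by (subst card_image) (auto simp: inj_on_def)
  moreover have "card Q = card S"
    unfolding Q_def by (rule card_image) (simp add: inj_on_def)
  ultimately show ?thesis
    unfolding inversions_on_def inversion_pairs_add X_def P_def Q_def by simp
qed

lemma shallow_defect_add:
  "shallow_defect (insert a (insert t S)) (q(a := t, t := a))
     = shallow_defect S q + 2 * (int t - int a - 1 - int (card S))"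
  unfolding shallow_defect_def
  using displacement_on_add inversions_on_add deficiencies_on_add by simp

lemma avoids_132_on_add:
  "avoids_132_on (insert a (insert t S)) (q(a := t, t := a)) \<longleftrightarrow> avoids_132_on S q"
proof -
  let ?p = "q(a := t, t := a)" and ?T = "insert a (insert t S)"
  have range: "\<And>x. x \<in> ?T \<Longrightarrow> a \<le> ?p x \<and> ?p x \<le> t"
    using q_inside a_less_t by fastforce
  have "i \<in> S \<and> j \<in> S \<and> k \<in> S"
    if ijk: "i \<in> ?T" "j \<in> ?T" "k \<in> ?T" "i < j" "j < k" "?p i < ?p k" for i j k
  proof -
    have "i \<noteq> a"
      using range[OF ijk(3)] ijk(6) a_less_t by auto
    moreover have "k \<noteq> t"
      using range[OF ijk(1)] ijk(6) a_less_t by auto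
    ultimately show ?thesis
      using ijk S_bounds a_less_t by fastforce
  qed
  then show ?thesis
    unfolding avoids_132_on_def using update_on_S by (smt (verit) insertCI)
qed

end

lemma shallow_132_involution_add_two_cycle_iff:
  assumes "a < t" and "q a = a" and "q t = t"
  shows "shallow_132_involution {a..t} (q(a := t, t := a)) \<longleftrightarrow> shallow_132_involution {a<..<t} q"
proof -
  have interval: "{a..t} = insert a (insert t {a<..<t})"
    using assms(1) by auto
  have same_defect: "shallow_132_involution {a..t} (q(a := t, t := a)) \<longleftrightarrow> shallow_132_involution {a<..<t} q"
    if "involution q" and "q permutes {a<..<t}"
  proof -
    interpret outer_two_cycle "{a<..<t}" q a t
      using that assms(1) by unfold_locales auto
    have "int (card {a<..<t}) = int t - int a - 1"
      using assms(1) by simp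
    then show ?thesis
      unfolding shallow_132_involution_def interval
      using involution_add permutes_add avoids_132_on_add shallow_defect_add that by simp
  qed
  have "involution q \<and> q permutes {a<..<t}" if "shallow_132_involution {a..t} (q(a := t, t := a))"
  proof
    have p: "involution (q(a := t, t := a))" "q(a := t, t := a) permutes {a..t}"
      using that unfolding shallow_132_involution_def by auto
    have q_eq: "q = (q(a := t, t := a))(a := a, t := t)"
      using assms(2,3) by (simp add: fun_eq_iff)
    show "involution q"
      using involution_remove_two_cycle[OF p(1), of a t] assms(1) q_eq by simp
    show "q permutes {a<..<t}"
    proof (rule involution_permutesI[OF \<open>involution q\<close>])
      fix x
      assume "x \<notin> {a<..<t}"
      then show "q x = x"
        using assms permutes_not_in[OF p(2), of x] by (cases "x = a \<or> x = t") auto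
    qed
  qed
  then show ?thesis
    using same_defect unfolding shallow_132_involution_def by blast
qed

lemma finite_shallow_132_involutions: "finite S \<Longrightarrow> finite {p. shallow_132_involution S p}"
  by (rule finite_subset[OF _ finite_permutations]) (auto simp: shallow_132_involution_def)

lemma shallow_132_involution_fixes:
  assumes "shallow_132_involution S p" and "x \<notin> S"
  shows "p x = x"
proof -
  have "p permutes S"
    using assms(1) by (simp add: shallow_132_involution_def)
  then show ?thesis
    using assms(2) by (rule permutes_not_in)
qed

lemma shallow_132_involution_interval_max:
  assumes "a < t" and "shallow_132_involution {a..t} p"
  shows "p t = t \<or> p t = a"
proof -
  have "Min {a..t} = a"
    by (rule Min_eqI) (use assms(1) in auto)
  moreover have "p t = t \<or> p t = Min {a..t}"
    by (rule shallow_132_involution_max[OF finite_atLeastAtMost assms(2)]) (use assms(1) in auto)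
  ultimately show ?thesis
    by simp
qed

lemma shallow_132_involutions_Suc_Suc:
  fixes a n :: nat
  defines "t \<equiv> a + Suc n"
  shows "{p. shallow_132_involution {a..<a + Suc (Suc n)} p}
      = {p. shallow_132_involution {a..<t} p}
        \<union> (\<lambda>q. q(a := t, t := a)) ` {q. shallow_132_involution {a<..<t} q}"
proof -
  have closed: "{a..<a + Suc (Suc n)} = {a..t}" and snoc: "{a..t} = insert t {a..<t}"
    and a_less: "a < t"
    unfolding t_def by auto
  have fixed_iff: "shallow_132_involution {a..t} p \<longleftrightarrow> shallow_132_involution {a..<t} p" if "p t = t" for p
    using shallow_132_involution_insert_max[of "{a..<t}" t p] that unfolding snoc by simp
  have outer_iff: "shallow_132_involution {a..t} (q(a := t, t := a)) \<longleftrightarrow> shallow_132_involution {a<..<t} q"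
    if "q a = a" and "q t = t" for q
    using shallow_132_involution_add_two_cycle_iff[OF a_less that] .
  have "p \<in> {p. shallow_132_involution {a..<t} p} \<union> (\<lambda>q. q(a := t, t := a)) ` {q. shallow_132_involution {a<..<t} q}"
    if shallow: "shallow_132_involution {a..t} p" for p
    using shallow_132_involution_interval_max[OF a_less shallow]
  proof
    assume "p t = t"
    then show ?thesis
      using fixed_iff shallow by simp
  next
    assume "p t = a"
    then have "p a = t"
      using shallow involutionD[of p t] by (simp add: shallow_132_involution_def)
    then have "p = (p(a := a, t := t))(a := t, t := a)"
      using \<open>p t = a\<close> by (simp add: fun_eq_iff)
    moreover have "shallow_132_involution {a<..<t} (p(a := a, t := t))"
      using outer_iff[of "p(a := a, t := t)"] calculation shallow a_less by simp
    ultimately show ?thesis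
      by blast
  qed
  moreover have "shallow_132_involution {a..t} p" if "shallow_132_involution {a..<t} p" for p
    using fixed_iff shallow_132_involution_fixes[OF that] that by simp
  moreover have "shallow_132_involution {a..t} (q(a := t, t := a))" if "shallow_132_involution {a<..<t} q" for q
    using outer_iff shallow_132_involution_fixes[OF that] that by simp
  ultimately show ?thesis
    unfolding closed by auto
qed

theorem card_shallow_132_involutions: "card {p. shallow_132_involution {a..<a + n} p} = fib (Suc n)"
proof (induction n arbitrary: a rule: fib.induct)
  case 1
  have "{p. shallow_132_involution {a..<a + 0} p} = {id}"
    using shallow_132_involution_id unfolding shallow_132_involution_def by auto
  then show ?case
    by simp
next
  case 2
  have "{p. shallow_132_involution {a..<a + Suc 0} p} = {id}"
    using shallow_132_involution_id unfolding shallow_132_involution_def by auto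
  then show ?case
    by simp
next
  case (3 n)
  define t where "t = a + Suc n"
  let ?fixed = "{p. shallow_132_involution {a..<t} p}"
  let ?inner = "{q. shallow_132_involution {a<..<t} q}"
  have "{a<..<t} = {Suc a..<Suc a + n}"
    unfolding t_def by auto
  then have inner_eq: "?inner = {q. shallow_132_involution {Suc a..<Suc a + n} q}"
    by simp
  have fixes_t: "p t = t" if "p \<in> ?fixed" for p
    using that by (simp add: shallow_132_involution_fixes)
  have fixes_ends: "q a = a \<and> q t = t" if "q \<in> ?inner" for q
    using that by (simp add: shallow_132_involution_fixes)
  have "inj_on (\<lambda>q. q(a := t, t := a)) ?inner"
    by (rule inj_on_inverseI[where g = "\<lambda>p. p(a := a, t := t)"]) (auto simp: fun_eq_iff fixes_ends)
  moreover have "?fixed \<inter> (\<lambda>q. q(a := t, t := a)) ` ?inner = {}"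
    using fixes_t unfolding t_def by fastforce
  moreover have "finite ?fixed" and "finite ?inner"
    by (simp_all add: finite_shallow_132_involutions)
  ultimately have "card {p. shallow_132_involution {a..<a + Suc (Suc n)} p} = card ?fixed + card ?inner"
    unfolding shallow_132_involutions_Suc_Suc t_def[symmetric]
    by (simp add: card_Un_disjoint card_image)
  also have "\<dots> = fib (Suc (Suc n)) + fib (Suc n)"
    using "3.IH"(1)[of a] "3.IH"(2)[of "Suc a"] inner_eq unfolding t_def by simp
  finally show ?case
    by simp
qed

lemma funpow_involution: "involution p \<Longrightarrow> (p ^^ m) i = (if even m then i else p i)"
  by (induction m) (auto simp: involutionD)

lemma cyc_of_involution: "involution p \<Longrightarrow> cyc_of p i = {i, p i}"
proof -
  assume "involution p"
  then have "cyc_of p i \<subseteq> {i, p i}"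
    unfolding cyc_of_def using funpow_involution by auto
  moreover have "(p ^^ 0) i = i" and "(p ^^ 1) i = p i"
    by simp_all
  then have "{i, p i} \<subseteq> cyc_of p i"
    unfolding cyc_of_def by blast
  ultimately show ?thesis
    by blast
qed

lemma cycles_involution_smaller_point:
  assumes "involution p" and "p permutes S"
  shows "cyc_of p ` S = (\<lambda>i. {i, p i}) ` {i \<in> S. i \<le> p i}"
proof -
  have "{i, p i} \<in> (\<lambda>i. {i, p i}) ` {i \<in> S. i \<le> p i}" if "i \<in> S" for i
  proof (cases "i \<le> p i")
    case True
    then show ?thesis
      using that by auto
  next
    case False
    then have "p i \<in> {i \<in> S. i \<le> p i}"
      using that permutes_in_image[OF assms(2), of i] involutionD[OF assms(1), of i] by simp
    moreover have "{i, p i} = {p i, p (p i)}"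
      using involutionD[OF assms(1), of i] by auto
    ultimately show ?thesis
      by (simp only:) (rule imageI)
  qed
  then have "(\<lambda>i. {i, p i}) ` S = (\<lambda>i. {i, p i}) ` {i \<in> S. i \<le> p i}"
    by blast
  then show ?thesis
    by (simp add: cyc_of_involution[OF assms(1)])
qed

lemma card_cycles_involution:
  assumes "finite S" and "involution p" and "p permutes S"
  shows "card (cyc_of p ` S) + deficiencies_on S p = card S"
proof -
  let ?L = "{i \<in> S. i \<le> p i}" and ?G = "{i \<in> S. p i < i}"
  have "inj_on (\<lambda>i. {i, p i}) ?L"
    by (rule inj_onI) (auto simp: doubleton_eq_iff)
  then have "card (cyc_of p ` S) = card ?L"
    using cycles_involution_smaller_point[OF assms(2,3)] by (simp add: card_image)
  moreover have "?L \<union> ?G = S" and "?L \<inter> ?G = {}"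
    by auto
  then have "card ?L + card ?G = card S"
    using assms(1) card_Un_disjoint[of ?L ?G] by simp
  ultimately show ?thesis
    unfolding deficiencies_on_def by simp
qed

lemma avoids_132_iff_avoids_132_on: "avoids_132 n p \<longleftrightarrow> avoids_132_on {1..n} p"
proof -
  have "(\<exists>i j k. 1 \<le> i \<and> i < j \<and> j < k \<and> k \<le> n \<and> p i < p k \<and> p k < p j)
      \<longleftrightarrow> (\<exists>i\<in>{1..n}. \<exists>j\<in>{1..n}. \<exists>k\<in>{1..n}. i < j \<and> j < k \<and> p i < p k \<and> p k < p j)"
  proof
    assume "\<exists>i j k. 1 \<le> i \<and> i < j \<and> j < k \<and> k \<le> n \<and> p i < p k \<and> p k < p j"
    then obtain i j k where "1 \<le> i" "i < j" "j < k" "k \<le> n" "p i < p k" "p k < p j"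
      by blast
    then show "\<exists>i\<in>{1..n}. \<exists>j\<in>{1..n}. \<exists>k\<in>{1..n}. i < j \<and> j < k \<and> p i < p k \<and> p k < p j"
      by (intro bexI[of _ i] bexI[of _ j] bexI[of _ k]) auto
  next
    assume "\<exists>i\<in>{1..n}. \<exists>j\<in>{1..n}. \<exists>k\<in>{1..n}. i < j \<and> j < k \<and> p i < p k \<and> p k < p j"
    then obtain i j k where "i \<in> {1..n}" "k \<in> {1..n}" "i < j" "j < k" "p i < p k" "p k < p j"
      by blast
    then show "\<exists>i j k. 1 \<le> i \<and> i < j \<and> j < k \<and> k \<le> n \<and> p i < p k \<and> p k < p j"
      by (intro exI[of _ i] exI[of _ j] exI[of _ k]) auto
  qed
  then show ?thesis
    unfolding avoids_132_def avoids_132_on_def by blast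
qed

lemma shallow_iff_shallow_defect:
  assumes "involution p" and "p permutes {1..n}"
  shows "shallow n p \<longleftrightarrow> shallow_defect {1..n} p = 0"
proof -
  have "num_cycles n p + deficiencies_on {1..n} p = n"
    using card_cycles_involution[OF _ assms] unfolding num_cycles_def by simp
  then show ?thesis
    unfolding shallow_def reflength_def shallow_defect_def total_disp_def displacement_on_def
      inversions_def inversions_on_def by linarith
qed

theorem theorem3p6:
  fixes n :: nat
  assumes "n \<ge> 1"
  shows "card {p. p permutes {1..n} \<and> involution p \<and> avoids_132 n p \<and> shallow n p} = fib (n + 1)"
proof -
  have "{p. p permutes {1..n} \<and> involution p \<and> avoids_132 n p \<and> shallow n p}
      = {p. shallow_132_involution {1..<1 + n} p}"
    using avoids_132_iff_avoids_132_on shallow_iff_shallow_defect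
    by (auto simp: shallow_132_involution_def atLeastLessThanSuc_atLeastAtMost)
  then show ?thesis
    using card_shallow_132_involutions[of 1 n] by simp
qed

end
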